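(* Let $p\ge 3$ be prime and $q=p^r>3$. Then for every $n\ge 1$ there exists a local permutation polynomial $f\in\mathbb{F}_q[x_1,\dots,x_n]$ of degree $n(q-2)$.
   Context: $\mathbb{F}_q$ is the finite field with $q$ elements. A polynomial $f\in\mathbb{F}_q[x_1,\dots,x_n]$ is a local permutation polynomial (LPP) if, for each $i$ and each choice of the other coordinates $(a_j)_{j\ne i}\in\mathbb{F}_q^{n-1}$, the univariate polynomial in $x_i$ obtained by fixing $x_j=a_j$ for $j\ne i$ induces a bijection of $\mathbb{F}_q$. Polynomials are reduced (degree $<q$ in each variable), and degree means total degree. *)

theory Defs
  imports Main "HOL-Library.Cardinality" "HOL-Computational_Algebra.Primes"
begin

text \<open>Reduced polynomials in n variables x_0,...,x_{n-1} over a finite field 'a with q elements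
are represented by their coefficient functions c on exponent vectors e :: nat \<Rightarrow> nat,
where the support lies in exps n q (every exponent < q, variables beyond n unused).\<close>

definition exps :: "nat \<Rightarrow> nat \<Rightarrow> (nat \<Rightarrow> nat) set" where
  "exps n q = {e. (\<forall>i<n. e i < q) \<and> (\<forall>i\<ge>n. e i = 0)}"

definition reduced_poly :: "nat \<Rightarrow> nat \<Rightarrow> ((nat \<Rightarrow> nat) \<Rightarrow> 'a::zero) \<Rightarrow> bool" where
  "reduced_poly n q c \<longleftrightarrow> (\<forall>e. c e \<noteq> 0 \<longrightarrow> e \<in> exps n q)"

definition mpeval :: "nat \<Rightarrow> ((nat \<Rightarrow> nat) \<Rightarrow> 'a::{finite,field}) \<Rightarrow> (nat \<Rightarrow> 'a) \<Rightarrow> 'a" where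
  "mpeval n c x = (\<Sum>e\<in>exps n CARD('a). c e * (\<Prod>i<n. x i ^ e i))"

text \<open>Total degree (the zero polynomial gets degree 0 by convention; irrelevant below).\<close>
definition total_degree :: "nat \<Rightarrow> ((nat \<Rightarrow> nat) \<Rightarrow> 'a::zero) \<Rightarrow> nat" where
  "total_degree n c = Max (insert 0 {sum e {..<n} | e. c e \<noteq> 0})"

definition is_lpp :: "nat \<Rightarrow> ((nat \<Rightarrow> nat) \<Rightarrow> 'a::{finite,field}) \<Rightarrow> bool" where
  "is_lpp n c \<longleftrightarrow> (\<forall>i<n. \<forall>a::nat \<Rightarrow> 'a. bij (\<lambda>t. mpeval n c (a(i := t))))"

end

theory Submission
  imports Defs "HOL-Combinatorics.Transposition"
begin

text \<open>A function \<open>F\<close> on \<open>F\<^sub>q\<^sup>n\<close> is represented by its interpolating reduced polynomial, whose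
  coefficient of \<open>(x\<^sub>0 \<cdots> x\<^sub>n\<^sub>-\<^sub>1)\<^sup>q\<^sup>-\<^sup>2\<close> is \<open>(-1)\<^sup>n \<Sum>\<^sub>a F a \<cdot> a\<^sub>0 \<cdots> a\<^sub>n\<^sub>-\<^sub>1\<close>. If \<open>F\<close> is a local
  permutation and \<open>q\<close> is odd, every coefficient of a monomial containing some \<open>x\<^sub>i\<^sup>q\<^sup>-\<^sup>1\<close>
  vanishes, since the values of a permutation of \<open>F\<^sub>q\<close> sum to \<open>0\<close>; so the degree is \<open>n(q - 2)\<close>
  exactly when that sum is nonzero.

  Local permutations are built one variable at a time as \<open>F' (x, t) = \<sigma> (F x + \<beta> t)\<close>, with \<open>\<beta>\<close>
  an involution and \<open>\<sigma>\<close> a permutation. The weight \<open>w\<^sub>F z = \<Sum>\<^bsub>F a = z\<^esub> a\<^sub>0 \<cdots> a\<^sub>n\<^sub>-\<^sub>1\<close> of \<open>F'\<close> is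
  the convolution of \<open>w\<^sub>F\<close> with \<open>\<beta>\<close>, composed with \<open>\<sigma>\<^sup>-\<^sup>1\<close>. Suitable \<open>\<beta>\<close> and \<open>\<sigma>\<close> keep the weight
  non-affine at every step (this uses \<open>q > 3\<close>), and a last permutation makes
  \<open>\<Sum>\<^sub>z \<sigma> z \<cdot> w\<^sub>F z\<close>, the sum above, nonzero.\<close>

lemma of_nat_CARD_eq_0: "(of_nat CARD('a::{finite,field}) :: 'a) = 0"
proof -
  have "(\<Sum>y\<in>(UNIV::'a set). y + 1) = (\<Sum>y\<in>UNIV. y)"
    by (rule sum.reindex_bij_betw[OF bij_plus_right])
  then show ?thesis by (simp add: sum.distrib)
qed

lemma power_CARD_eq: "(x::'a::{finite,field}) ^ CARD('a) = x"
proof (cases "x = 0")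
  case True
  then show ?thesis by simp
next
  case False
  let ?S = "UNIV - {0::'a}"
  have "bij_betw ((*) x) ?S ?S"
    by (rule bij_betw_byWitness[where f'="\<lambda>y. y / x"]) (use False in auto)
  then have "(\<Prod>y\<in>?S. x * y) = (\<Prod>y\<in>?S. y)"
    by (rule prod.reindex_bij_betw)
  then have "x ^ (CARD('a) - 1) = 1"
    by (simp add: prod.distrib card_Diff_subset)
  then show ?thesis
    by (metis finite_UNIV_card_ge_0 finite Suc_diff_1 power_Suc mult_1_right)
qed

lemma sum_UNIV_eq_0:
  assumes "(2::'a::{finite,field}) \<noteq> 0"
  shows "(\<Sum>y\<in>(UNIV::'a set). y) = 0"
proof -
  have "bij ((*) (2::'a))"
    by (rule bij_betw_byWitness[where f'="\<lambda>y. y / 2"]) (use assms in auto)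
  then have "(\<Sum>y\<in>(UNIV::'a set). 2 * y) = (\<Sum>y\<in>UNIV. y)"
    by (rule sum.reindex_bij_betw)
  then have "2 * (\<Sum>y\<in>(UNIV::'a set). y) = (\<Sum>y\<in>UNIV. y)"
    by (simp add: sum_distrib_left)
  then show ?thesis by (metis add_cancel_right_left mult_2)
qed

lemma sum_bij_eq_0:
  assumes "(2::'a::{finite,field}) \<noteq> 0" and "bij (f :: 'a \<Rightarrow> 'a)"
  shows "(\<Sum>t\<in>UNIV. f t) = 0"
  using sum.reindex_bij_betw[OF assms(2), of "\<lambda>y. y"] sum_UNIV_eq_0[OF assms(1)] by simp

lemma two_neq_zero_if_odd_CARD:
  assumes "odd CARD('a::{finite,field})"
  shows "(2::'a) \<noteq> 0"
proof
  assume two: "(2::'a) = 0"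
  obtain m where "CARD('a) = 2 * m + 1" using assms oddE by blast
  then have "(of_nat CARD('a)::'a) = of_nat m * 2 + 1" by simp
  then show False using two of_nat_CARD_eq_0[where 'a='a] by simp
qed

definition points :: "nat \<Rightarrow> (nat \<Rightarrow> 'a::zero) set" where
  "points n = {x. \<forall>i\<ge>n. x i = 0}"

lemma bij_betw_points_update:
  assumes "k < n"
  shows "bij_betw (\<lambda>(x, t). x(k := t)) ({x \<in> points n. x k = 0} \<times> (UNIV::'a::zero set)) (points n)"
  by (rule bij_betw_byWitness[where f'="\<lambda>z. (z(k := 0), z k)"])
    (use assms in \<open>auto simp: points_def fun_eq_iff\<close>)

lemma points_Suc_update_0: "{x \<in> points (Suc n). x n = 0} = points n"
  by (auto simp: points_def) (metis le_eq_less_or_eq Suc_leI)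

lemma finite_points: "finite (points n :: (nat \<Rightarrow> 'a::{zero,finite}) set)"
proof (induction n)
  case 0
  have "points 0 = {(\<lambda>_. 0) :: nat \<Rightarrow> 'a}" by (auto simp: points_def)
  then show ?case by simp
next
  case (Suc n)
  have "points (Suc n) = (\<lambda>(x, t). x(n := t)) ` (points n \<times> (UNIV::'a set))"
    using bij_betw_points_update[of n "Suc n", where 'a='a]
    by (simp add: points_Suc_update_0 bij_betw_def)
  then show ?case using Suc by simp
qed

lemma sum_points_update:
  assumes "k < n"
  shows "(\<Sum>x\<in>points n. g x)
       = (\<Sum>x\<in>{x \<in> (points n :: (nat \<Rightarrow> 'a::{zero,finite}) set). x k = 0}. \<Sum>t\<in>UNIV. g (x(k := t)))"
  using sum.reindex_bij_betw[OF bij_betw_points_update[OF assms], of g]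
  by (simp add: sum.cartesian_product split_def)

lemma sum_points_Suc:
  "(\<Sum>x\<in>points (Suc n). g x) = (\<Sum>x\<in>(points n :: (nat \<Rightarrow> 'a::{zero,finite}) set). \<Sum>t\<in>UNIV. g (x(n := t)))"
  using sum_points_update[of n "Suc n" g] by (simp add: points_Suc_update_0)

lemma bij_betw_exps_Suc: "bij_betw (\<lambda>(e, j). e(n := j)) (exps n q \<times> {..<q}) (exps (Suc n) q)"
  by (rule bij_betw_byWitness[where f'="\<lambda>e. (e(n := 0), e n)"])
    (auto simp: exps_def fun_eq_iff less_Suc_eq)

lemma exps_0: "exps 0 q = {\<lambda>_. 0}"
  by (auto simp: exps_def)

lemma sum_exps_prod:
  fixes g :: "nat \<Rightarrow> nat \<Rightarrow> 'b::comm_semiring_1"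
  shows "(\<Sum>e\<in>exps n q. \<Prod>i<n. g i (e i)) = (\<Prod>i<n. \<Sum>j<q. g i j)"
proof (induction n)
  case (Suc n)
  have "(\<Sum>e\<in>exps (Suc n) q. \<Prod>i<Suc n. g i (e i))
      = (\<Sum>(e, j)\<in>exps n q \<times> {..<q}. \<Prod>i<Suc n. g i ((e(n := j)) i))"
    using sum.reindex_bij_betw[OF bij_betw_exps_Suc[of n q], of "\<lambda>e. \<Prod>i<Suc n. g i (e i)"]
    by (simp add: split_def)
  also have "\<dots> = (\<Sum>e\<in>exps n q. \<Sum>j<q. (\<Prod>i<n. g i (e i)) * g n j)"
    unfolding sum.cartesian_product by (simp add: split_def lessThan_Suc mult.commute)
  also have "\<dots> = (\<Sum>e\<in>exps n q. \<Prod>i<n. g i (e i)) * (\<Sum>j<q. g n j)"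
    by (simp add: sum_distrib_left sum_distrib_right) (rule sum.swap)
  finally show ?case using Suc by (simp add: lessThan_Suc mult.commute)
qed (simp add: exps_0)

section \<open>Interpolation\<close>

text \<open>The coefficients of the indicator polynomial \<open>1 - (x - a) ^ (q - 1)\<close> of the point \<open>a\<close>.\<close>
definition indicator_coeff :: "nat \<Rightarrow> 'a \<Rightarrow> 'a::{finite,field}" where
  "indicator_coeff j a =
     (if j = 0 then 1 - a ^ (CARD('a) - 1) else - (a ^ (CARD('a) - 1 - j)))"

lemma sum_indicator_coeff:
  "(\<Sum>j<CARD('a). indicator_coeff j a * x ^ j) = (if x = a then 1 else (0::'a::{finite,field}))"
proof -
  let ?q = "CARD('a)"
  let ?S = "\<Sum>j<?q. a ^ (?q - Suc j) * x ^ j"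
  have termwise: "indicator_coeff j a * x ^ j = (if j = 0 then 1 else 0) - a ^ (?q - Suc j) * x ^ j" for j
    by (simp add: indicator_coeff_def algebra_simps)
  have "(\<Sum>j<?q. indicator_coeff j a * x ^ j) = (\<Sum>j<?q. if j = 0 then 1 else 0) - ?S"
    unfolding termwise by (rule sum_subtractf)
  then have sum_eq: "(\<Sum>j<?q. indicator_coeff j a * x ^ j) = 1 - ?S"
    by simp
  show ?thesis
  proof (cases "x = a")
    case True
    then have "?S = of_nat ?q * a ^ (?q - 1)"
      by (simp flip: power_add)
    then show ?thesis using sum_eq True by (simp add: of_nat_CARD_eq_0)
  next
    case False
    have "(x - a) * ?S = (x - a) * 1"
      using power_diff_sumr2[of x ?q a] by (simp add: power_CARD_eq)
    then show ?thesis using sum_eq False by simp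
  qed
qed

definition depends_on_first :: "nat \<Rightarrow> ((nat \<Rightarrow> 'a) \<Rightarrow> 'b) \<Rightarrow> bool" where
  "depends_on_first n F \<longleftrightarrow> (\<forall>x y. (\<forall>i<n. x i = y i) \<longrightarrow> F x = F y)"

definition interpolation_coeff :: "nat \<Rightarrow> ((nat \<Rightarrow> 'a) \<Rightarrow> 'a) \<Rightarrow> (nat \<Rightarrow> nat) \<Rightarrow> 'a::{finite,field}"
  where "interpolation_coeff n F e =
    (if e \<in> exps n CARD('a) then \<Sum>a\<in>points n. F a * (\<Prod>i<n. indicator_coeff (e i) (a i)) else 0)"

lemma reduced_poly_interpolation_coeff: "reduced_poly n CARD('a) (interpolation_coeff n F :: _ \<Rightarrow> 'a::{finite,field})"
  by (auto simp: reduced_poly_def interpolation_coeff_def)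

lemma prod_indicator_points:
  assumes "a \<in> points n" "x \<in> points n"
  shows "(\<Prod>i<n. if x i = a i then 1 else 0) = (if a = x then 1 else (0::'a::{zero,comm_semiring_1}))"
proof (cases "a = x")
  case False
  then obtain k where k: "a k \<noteq> x k" by (auto simp: fun_eq_iff)
  moreover have "k < n"
  proof (rule ccontr)
    assume "\<not> k < n"
    then have "a k = 0" "x k = 0" using assms by (simp_all add: points_def)
    then show False using k by simp
  qed
  ultimately have "(\<Prod>i<n. if x i = a i then 1 else (0::'a)) = 0"
    by (intro prod_zero) (auto intro!: bexI[of _ k])
  then show ?thesis using False by simp
qed simp

lemma mpeval_interpolation_coeff:
  fixes F :: "(nat \<Rightarrow> 'a) \<Rightarrow> 'a::{finite,field}"
  assumes "depends_on_first n F"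
  shows "mpeval n (interpolation_coeff n F) x = F x"
proof -
  let ?q = "CARD('a)"
  define x' where "x' i = (if i < n then x i else 0)" for i
  have x': "x' \<in> points n" by (simp add: x'_def points_def)
  have "mpeval n (interpolation_coeff n F) x
      = (\<Sum>e\<in>exps n ?q. \<Sum>a\<in>points n. F a * (\<Prod>i<n. indicator_coeff (e i) (a i)) * (\<Prod>i<n. x i ^ e i))"
    unfolding mpeval_def interpolation_coeff_def by (simp add: sum_distrib_right)
  also have "\<dots> = (\<Sum>a\<in>points n. F a * (\<Sum>e\<in>exps n ?q. \<Prod>i<n. indicator_coeff (e i) (a i) * x i ^ e i))"
    by (subst sum.swap) (simp add: sum_distrib_left prod.distrib mult.assoc)
  also have "\<dots> = (\<Sum>a\<in>points n. F a * (\<Prod>i<n. if x' i = a i then 1 else 0))"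
    by (simp add: sum_exps_prod[of "\<lambda>i j. indicator_coeff j (a i) * x i ^ j" for a]
        sum_indicator_coeff x'_def)
  also have "\<dots> = (\<Sum>a\<in>points n. if a = x' then F a else 0)"
    using x' by (intro sum.cong) (simp_all add: prod_indicator_points)
  also have "\<dots> = F x'"
    using x' by (simp add: finite_points)
  also have "\<dots> = F x"
    using assms by (auto simp: depends_on_first_def x'_def)
  finally show ?thesis .
qed

section \<open>Degree of the interpolant of a local permutation\<close>

definition local_perm :: "nat \<Rightarrow> ((nat \<Rightarrow> 'a) \<Rightarrow> 'a) \<Rightarrow> bool" where
  "local_perm n F \<longleftrightarrow> (\<forall>i<n. \<forall>a. bij (\<lambda>t. F (a(i := t))))"

lemma is_lpp_iff_local_perm: "is_lpp n c \<longleftrightarrow> local_perm n (mpeval n c)"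
  by (simp add: is_lpp_def local_perm_def)

text \<open>\<open>indicator_coeff (q - 1) b = -1\<close> does not depend on \<open>b\<close>, so summing first along the
  \<open>k\<close>-th coordinate leaves sums of the values of permutations of the field.\<close>
lemma interpolation_coeff_eq_0_if_exponent_eq:
  fixes F :: "(nat \<Rightarrow> 'a) \<Rightarrow> 'a::{finite,field}"
  assumes "local_perm n F" and "(2::'a) \<noteq> 0" and "k < n" and "e k = CARD('a) - 1"
  shows "interpolation_coeff n F e = 0"
proof (cases "e \<in> exps n CARD('a)")
  case True
  let ?P = "\<lambda>a::nat \<Rightarrow> 'a. \<Prod>i<n. indicator_coeff (e i) (a i)"
  have P_update: "?P (a(k := t)) = ?P a" for a t
    using assms(4) by (intro prod.cong) (auto simp: indicator_coeff_def)
  have "interpolation_coeff n F e = (\<Sum>a\<in>points n. F a * ?P a)"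
    using True by (simp add: interpolation_coeff_def)
  also have "\<dots> = (\<Sum>a\<in>{x \<in> points n. x k = 0}. (\<Sum>t\<in>UNIV. F (a(k := t))) * ?P a)"
    by (simp only: sum_points_update[OF assms(3)] P_update sum_distrib_right)
  also have "\<dots> = 0"
    using assms(1,3) sum_bij_eq_0[OF assms(2)] by (simp add: local_perm_def)
  finally show ?thesis .
qed (simp add: interpolation_coeff_def)

lemma interpolation_coeff_top:
  fixes F :: "(nat \<Rightarrow> 'a) \<Rightarrow> 'a::{finite,field}"
  assumes "CARD('a) > 3"
  shows "interpolation_coeff n F (\<lambda>i. if i < n then CARD('a) - 2 else 0)
       = (-1) ^ n * (\<Sum>a\<in>points n. F a * (\<Prod>i<n. a i))"
proof -
  have "indicator_coeff (CARD('a) - 2) b = - b" for b :: 'a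
    using assms by (simp add: indicator_coeff_def numeral_2_eq_2 Suc_diff_Suc)
  moreover have "(\<lambda>i. if i < n then CARD('a) - 2 else 0) \<in> exps n CARD('a)"
    using assms by (auto simp: exps_def)
  ultimately show ?thesis
    by (simp add: interpolation_coeff_def prod_uminus sum_distrib_left mult.left_commute)
qed

lemma interpolation_coeff_nonzero_exponent_le:
  fixes F :: "(nat \<Rightarrow> 'a) \<Rightarrow> 'a::{finite,field}"
  assumes "local_perm n F" and "(2::'a) \<noteq> 0"
    and "interpolation_coeff n F e \<noteq> 0" and "i < n"
  shows "e i \<le> CARD('a) - 2"
proof -
  have "e \<in> exps n CARD('a)"
    using assms(3) by (meson interpolation_coeff_def)
  then have "e i < CARD('a)"
    using assms(4) by (simp add: exps_def)
  moreover have "e i \<noteq> CARD('a) - 1"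
    using interpolation_coeff_eq_0_if_exponent_eq[OF assms(1,2,4)] assms(3) by blast
  ultimately show ?thesis by linarith
qed

lemma total_degree_interpolation_coeff:
  fixes F :: "(nat \<Rightarrow> 'a) \<Rightarrow> 'a::{finite,field}"
  assumes "local_perm n F" and "(2::'a) \<noteq> 0" and "CARD('a) > 3"
    and "(\<Sum>a\<in>points n. F a * (\<Prod>i<n. a i)) \<noteq> 0"
  shows "total_degree n (interpolation_coeff n F) = n * (CARD('a) - 2)"
proof -
  define S where "S = {sum e {..<n} | e. interpolation_coeff n F e \<noteq> 0}"
  have upper: "d \<le> n * (CARD('a) - 2)" if "d \<in> S" for d
  proof -
    obtain e where d: "d = sum e {..<n}" and nonzero: "interpolation_coeff n F e \<noteq> 0"
      using \<open>d \<in> S\<close> unfolding S_def by blast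
    have "e i \<le> CARD('a) - 2" if "i \<in> {..<n}" for i
      using interpolation_coeff_nonzero_exponent_le[OF assms(1,2) nonzero] that by simp
    then have "sum e {..<n} \<le> of_nat (card {..<n}) * (CARD('a) - 2)"
      by (rule sum_bounded_above)
    then show ?thesis by (simp add: d)
  qed
  let ?top = "\<lambda>i. if i < n then CARD('a) - 2 else 0"
  have "interpolation_coeff n F ?top \<noteq> 0"
    using assms(4) by (simp add: interpolation_coeff_top[OF assms(3)])
  then have "sum ?top {..<n} \<in> S"
    unfolding S_def by (intro CollectI exI[of _ ?top] conjI refl)
  then have attained: "n * (CARD('a) - 2) \<in> S"
    by simp
  have "insert 0 S \<subseteq> {..n * (CARD('a) - 2)}"
    using upper by auto
  then have "finite (insert 0 S)"
    by (rule finite_subset) simp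
  then have "Max (insert 0 S) = n * (CARD('a) - 2)"
    by (rule Max_eqI) (use upper attained in auto)
  then show ?thesis
    by (simp add: total_degree_def S_def)
qed

section \<open>Construction of local permutations\<close>

definition weight :: "nat \<Rightarrow> ((nat \<Rightarrow> 'a) \<Rightarrow> 'a) \<Rightarrow> 'a \<Rightarrow> 'a::{finite,field}" where
  "weight n F z = (\<Sum>x\<in>points n. if F x = z then \<Prod>i<n. x i else 0)"

definition convolution :: "('a \<Rightarrow> 'a) \<Rightarrow> ('a \<Rightarrow> 'a) \<Rightarrow> 'a \<Rightarrow> 'a::{finite,ring}" where
  "convolution w \<beta> s = (\<Sum>u\<in>UNIV. w u * \<beta> (s - u))"

text \<open>\<open>w - w 0\<close> is additive, i.e. \<open>w\<close> is affine over the prime field.\<close>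
definition additive_affine :: "('a \<Rightarrow> 'a::ab_group_add) \<Rightarrow> bool" where
  "additive_affine w \<longleftrightarrow> (\<forall>x y. w (x + y) - w y = w x - w 0)"

lemma sum_points_weight:
  "(\<Sum>x\<in>points n. g (F x) * (\<Prod>i<n. x i)) = (\<Sum>s\<in>UNIV. g s * weight n F s)"
proof -
  have "(\<Sum>s\<in>UNIV. g s * weight n F s)
      = (\<Sum>s\<in>UNIV. \<Sum>x\<in>points n. if F x = s then g s * (\<Prod>i<n. x i) else 0)"
    unfolding weight_def sum_distrib_left by (intro sum.cong refl) simp
  also have "\<dots> = (\<Sum>x\<in>points n. \<Sum>s\<in>UNIV. if F x = s then g s * (\<Prod>i<n. x i) else 0)"
    by (rule sum.swap)
  also have "\<dots> = (\<Sum>x\<in>points n. g (F x) * (\<Prod>i<n. x i))"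
    by simp
  finally show ?thesis ..
qed

lemma weight_comp_bij:
  assumes "bij \<sigma>"
  shows "weight n (\<sigma> \<circ> F) z = weight n F (inv \<sigma> z)"
  unfolding weight_def by (simp add: bij_inv_eq_iff[OF assms])

lemma weight_extend:
  fixes F :: "(nat \<Rightarrow> 'a) \<Rightarrow> 'a::{finite,field}"
  assumes "depends_on_first n F" and involution: "\<And>x. \<beta> (\<beta> x) = x"
  shows "weight (Suc n) (\<lambda>x. F x + \<beta> (x n)) = convolution (weight n F) \<beta>"
proof
  fix s
  have F_update: "F (y(n := t)) = F y" for y t
    using assms(1) by (simp add: depends_on_first_def)
  have prod_update: "(\<Prod>i<Suc n. (y(n := t)) i) = (\<Prod>i<n. y i) * t" for y :: "nat \<Rightarrow> 'a" and t
  proof -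
    have "(\<Prod>i<n. (y(n := t)) i) = (\<Prod>i<n. y i)"
      by (rule prod.cong) auto
    then show ?thesis by (simp add: lessThan_Suc mult.commute)
  qed
  have solve: "F y + \<beta> t = s \<longleftrightarrow> t = \<beta> (s - F y)" for y t
  proof -
    have "F y + \<beta> t = s \<longleftrightarrow> \<beta> t = s - F y"
      by (auto simp: algebra_simps)
    also have "\<dots> \<longleftrightarrow> t = \<beta> (s - F y)"
      using involution by metis
    finally show ?thesis .
  qed
  have "weight (Suc n) (\<lambda>x. F x + \<beta> (x n)) s
      = (\<Sum>y\<in>points n. \<Sum>t\<in>UNIV. if t = \<beta> (s - F y) then (\<Prod>i<n. y i) * t else 0)"
    unfolding weight_def sum_points_Suc by (simp only: F_update prod_update fun_upd_same solve)
  also have "\<dots> = (\<Sum>y\<in>points n. \<beta> (s - F y) * (\<Prod>i<n. y i))"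
    by (simp add: mult.commute)
  also have "\<dots> = convolution (weight n F) \<beta> s"
    unfolding convolution_def using sum_points_weight[of "\<lambda>u. \<beta> (s - u)" F n]
    by (simp add: mult.commute)
  finally show "weight (Suc n) (\<lambda>x. F x + \<beta> (x n)) s = convolution (weight n F) \<beta> s" .
qed

lemma local_perm_extend:
  fixes F :: "(nat \<Rightarrow> 'a) \<Rightarrow> 'a::group_add"
  assumes "local_perm n F" and "depends_on_first n F" and "bij \<beta>"
  shows "local_perm (Suc n) (\<lambda>x. F x + \<beta> (x n))"
  unfolding local_perm_def
proof (intro allI impI)
  fix i a
  assume "i < Suc n"
  then consider "i = n" | "i < n" by linarith
  then show "bij (\<lambda>t. F (a(i := t)) + \<beta> ((a(i := t)) n))"
  proof cases
    case 1
    have "F (a(n := t)) = F a" for t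
      using assms(2) by (simp add: depends_on_first_def)
    then have "(\<lambda>t. F (a(i := t)) + \<beta> ((a(i := t)) n)) = (+) (F a) \<circ> \<beta>"
      using 1 by (simp add: fun_eq_iff)
    then show ?thesis
      using bij_comp[OF assms(3) bij_plus] by simp
  next
    case 2
    then have "(\<lambda>t. F (a(i := t)) + \<beta> ((a(i := t)) n)) = (\<lambda>u. u + \<beta> (a n)) \<circ> (\<lambda>t. F (a(i := t)))"
      by (simp add: fun_eq_iff)
    moreover have "bij (\<lambda>t. F (a(i := t)))"
      using 2 assms(1) by (simp add: local_perm_def)
    ultimately show ?thesis
      using bij_comp[OF _ bij_plus_right] by simp
  qed
qed

lemma depends_on_first_extend:
  assumes "depends_on_first n F"
  shows "depends_on_first (Suc n) (\<lambda>x. F x + \<beta> (x n))"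
  unfolding depends_on_first_def
proof (intro allI impI)
  fix x y :: "nat \<Rightarrow> 'a"
  assume "\<forall>i<Suc n. x i = y i"
  then have "F x = F y" and "x n = y n"
    using assms by (simp_all add: depends_on_first_def)
  then show "F x + \<beta> (x n) = F y + \<beta> (y n)" by simp
qed

lemma local_perm_comp:
  assumes "local_perm n F" and "bij \<sigma>"
  shows "local_perm n (\<sigma> \<circ> F)"
  unfolding local_perm_def
proof (intro allI impI)
  fix i a
  assume "i < n"
  then have "bij (\<lambda>t. F (a(i := t)))"
    using assms(1) by (simp add: local_perm_def)
  from bij_comp[OF this assms(2)] show "bij (\<lambda>t. (\<sigma> \<circ> F) (a(i := t)))"
    by (simp add: comp_def)
qed

lemma depends_on_first_comp: "depends_on_first n F \<Longrightarrow> depends_on_first n (\<sigma> \<circ> F)"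
  unfolding depends_on_first_def by (metis comp_apply)

lemma convolution_transpose_diff:
  fixes w :: "'a \<Rightarrow> 'a::{finite,field}"
  assumes "x \<noteq> 0"
  shows "convolution w (transpose 0 x) s - convolution w id s = x * (w s - w (s - x))"
proof -
  have "w u * transpose 0 x (s - u) - w u * id (s - u)
      = (if u = s then w s * x else 0) + (if u = s - x then - (w (s - x) * x) else 0)" for u
    using assms by (auto simp: transpose_def algebra_simps)
  then have "convolution w (transpose 0 x) s - convolution w id s
      = (\<Sum>u\<in>UNIV. (if u = s then w s * x else 0) + (if u = s - x then - (w (s - x) * x) else 0))"
    unfolding convolution_def by (simp add: sum_subtractf[symmetric])
  also have "\<dots> = w s * x - w (s - x) * x"
    by (simp only: sum.distrib sum.delta[OF finite] UNIV_I if_True diff_conv_add_uminus)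
  also have "\<dots> = x * (w s - w (s - x))"
    by (simp add: algebra_simps)
  finally show ?thesis .
qed

lemma exists_involution_convolution_nonconstant:
  fixes w :: "'a \<Rightarrow> 'a::{finite,field}"
  assumes "\<not> additive_affine w"
  shows "\<exists>\<beta>. (\<forall>x. \<beta> (\<beta> x) = x) \<and> (\<exists>s s'. convolution w \<beta> s \<noteq> convolution w \<beta> s')"
proof -
  obtain x y where xy: "w (x + y) - w y \<noteq> w x - w 0"
    using assms by (auto simp: additive_affine_def)
  then have "x \<noteq> 0" by auto
  then have "convolution w (transpose 0 x) (x + y) - convolution w id (x + y)
      \<noteq> convolution w (transpose 0 x) x - convolution w id x"
    using xy by (simp add: convolution_transpose_diff)
  then consider "convolution w id (x + y) \<noteq> convolution w id x"
    | "convolution w (transpose 0 x) (x + y) \<noteq> convolution w (transpose 0 x) x"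
    by fastforce
  then show ?thesis
  proof cases
    case 1
    then show ?thesis by (intro exI[of _ id]) auto
  next
    case 2
    then show ?thesis by (intro exI[of _ "transpose 0 x"]) auto
  qed
qed

text \<open>If \<open>D\<close> is additive-affine but not constant, swapping \<open>0\<close> and a point \<open>e\<close> with
  \<open>D e \<noteq> D 0\<close> breaks additivity at any \<open>c \<notin> {0, e, -e}\<close>; such \<open>c\<close> exists as \<open>q > 3\<close>.\<close>
lemma exists_perm_not_additive_affine:
  fixes D :: "'a \<Rightarrow> 'a::{finite,field}"
  assumes "CARD('a) > 3" and "(2::'a) \<noteq> 0" and "D a \<noteq> D b"
  shows "\<exists>\<pi>. bij \<pi> \<and> \<not> additive_affine (D \<circ> \<pi>)"
proof (cases "additive_affine D")
  case True
  then have additive: "D (x + y) - D y = D x - D 0" for x y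
    by (simp add: additive_affine_def)
  obtain e where e: "D e \<noteq> D 0"
    using assms(3) by metis
  then have "e \<noteq> 0" by auto
  have "card {0, e, -e} \<le> 3"
    by (rule card_insert_le_m1; simp add: card_insert_le_m1)+
  then have "{0, e, -e} \<noteq> (UNIV::'a set)"
    using assms(1) by auto
  then obtain c where c: "c \<notin> {0, e, -e}"
    by blast
  let ?E = "D \<circ> transpose 0 e"
  have "?E (e + c) = D (e + c)" "?E c = D c" "?E e = D 0" "?E 0 = D e"
    using c \<open>e \<noteq> 0\<close> by (auto simp: transpose_def add_eq_0_iff)
  then have "?E (e + c) - ?E c - (?E e - ?E 0) = 2 * (D e - D 0)"
    using additive[of e c] by (simp add: algebra_simps)
  also have "\<dots> \<noteq> 0"
    using assms(2) e by simp
  finally have "?E (e + c) - ?E c \<noteq> ?E e - ?E 0"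
    by simp
  then have "\<not> additive_affine ?E"
    unfolding additive_affine_def by blast
  then show ?thesis by (intro exI[of _ "transpose 0 e"]) simp
next
  case False
  then show ?thesis by (intro exI[of _ id]) simp
qed

lemma exists_perm_sum_mult_nonzero:
  fixes D :: "'a \<Rightarrow> 'a::{finite,field}"
  assumes "D a \<noteq> D b"
  shows "\<exists>\<sigma>. bij \<sigma> \<and> (\<Sum>s\<in>UNIV. \<sigma> s * D s) \<noteq> 0"
proof (cases "(\<Sum>s\<in>UNIV. s * D s) = 0")
  case True
  have "a \<noteq> b" using assms by auto
  have "transpose a b s * D s - s * D s
      = (if s = a then (b - a) * D a else 0) + (if s = b then (a - b) * D b else 0)" for s
    using \<open>a \<noteq> b\<close> by (auto simp: transpose_def left_diff_distrib)
  then have "(\<Sum>s\<in>UNIV. transpose a b s * D s) - (\<Sum>s\<in>UNIV. s * D s)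
      = (\<Sum>s\<in>UNIV. (if s = a then (b - a) * D a else 0) + (if s = b then (a - b) * D b else 0))"
    by (simp add: sum_subtractf[symmetric])
  also have "\<dots> = (b - a) * (D a - D b)"
    by (simp add: sum.distrib algebra_simps)
  finally have "(\<Sum>s\<in>UNIV. transpose a b s * D s) \<noteq> 0"
    using True \<open>a \<noteq> b\<close> assms by simp
  then show ?thesis by (intro exI[of _ "transpose a b"]) simp
next
  case False
  then show ?thesis by (intro exI[of _ id]) simp
qed

lemma exists_local_perm_weight_not_additive_affine:
  assumes "CARD('a::{finite,field}) > 3" and "(2::'a) \<noteq> 0"
  shows "\<exists>F :: (nat \<Rightarrow> 'a) \<Rightarrow> 'a.
           local_perm n F \<and> depends_on_first n F \<and> \<not> additive_affine (weight n F)"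
proof (induction n)
  case 0
  let ?w = "weight 0 (\<lambda>_. 0 :: 'a)"
  have "points 0 = {(\<lambda>_. 0) :: nat \<Rightarrow> 'a}"
    by (auto simp: points_def)
  then have w: "?w z = (if z = 0 then 1 else 0)" for z
    by (simp add: weight_def)
  have "?w (1 + 1) - ?w 1 \<noteq> ?w 1 - ?w 0"
    using assms(2) by (simp add: w)
  then have "\<not> additive_affine ?w"
    unfolding additive_affine_def by blast
  then show ?case
    by (intro exI[of _ "\<lambda>_. 0"]) (simp add: local_perm_def depends_on_first_def)
next
  case (Suc n)
  then obtain F :: "(nat \<Rightarrow> 'a) \<Rightarrow> 'a" where F: "local_perm n F" "depends_on_first n F"
    and not_affine_F: "\<not> additive_affine (weight n F)"
    by blast
  obtain \<beta> s s' where involution: "\<And>x. \<beta> (\<beta> x) = x"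
    and "convolution (weight n F) \<beta> s \<noteq> convolution (weight n F) \<beta> s'"
    using exists_involution_convolution_nonconstant[OF not_affine_F] by blast
  then obtain \<pi> where "bij \<pi>" and not_affine: "\<not> additive_affine (convolution (weight n F) \<beta> \<circ> \<pi>)"
    using exists_perm_not_additive_affine[OF assms] by blast
  let ?G = "\<lambda>x. F x + \<beta> (x n)"
  have "bij (inv \<pi>)"
    using \<open>bij \<pi>\<close> by (rule bij_imp_bij_inv)
  have weight_eq: "weight (Suc n) (inv \<pi> \<circ> ?G) = convolution (weight n F) \<beta> \<circ> \<pi>"
  proof
    fix z
    have "weight (Suc n) (inv \<pi> \<circ> ?G) z = weight (Suc n) ?G (\<pi> z)"
      using weight_comp_bij[OF \<open>bij (inv \<pi>)\<close>] inv_inv_eq[OF \<open>bij \<pi>\<close>] by simp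
    then show "weight (Suc n) (inv \<pi> \<circ> ?G) z = (convolution (weight n F) \<beta> \<circ> \<pi>) z"
      by (simp add: weight_extend[OF F(2) involution])
  qed
  have "local_perm (Suc n) (inv \<pi> \<circ> ?G)"
    using local_perm_comp[OF local_perm_extend[OF F involuntory_imp_bij[OF involution]] \<open>bij (inv \<pi>)\<close>] .
  moreover have "depends_on_first (Suc n) (inv \<pi> \<circ> ?G)"
    using depends_on_first_comp[OF depends_on_first_extend[OF F(2)]] .
  moreover have "\<not> additive_affine (weight (Suc n) (inv \<pi> \<circ> ?G))"
    unfolding weight_eq by (rule not_affine)
  ultimately show ?case
    by blast
qed

lemma exists_local_perm_top_sum_nonzero:
  assumes "CARD('a::{finite,field}) > 3" and "(2::'a) \<noteq> 0"
  shows "\<exists>F :: (nat \<Rightarrow> 'a) \<Rightarrow> 'a.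
           local_perm n F \<and> depends_on_first n F \<and> (\<Sum>a\<in>points n. F a * (\<Prod>i<n. a i)) \<noteq> 0"
proof -
  obtain F :: "(nat \<Rightarrow> 'a) \<Rightarrow> 'a" where F: "local_perm n F" "depends_on_first n F"
    and "\<not> additive_affine (weight n F)"
    using exists_local_perm_weight_not_additive_affine[OF assms] by blast
  then obtain x y where "weight n F (x + y) - weight n F y \<noteq> weight n F x - weight n F 0"
    unfolding additive_affine_def by blast
  then have "weight n F (x + y) \<noteq> weight n F y \<or> weight n F x \<noteq> weight n F 0"
    by auto
  then obtain a b where "weight n F a \<noteq> weight n F b"
    by blast
  then obtain \<sigma> where "bij \<sigma>" and "(\<Sum>s\<in>UNIV. \<sigma> s * weight n F s) \<noteq> 0"
    using exists_perm_sum_mult_nonzero by blast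
  then have "(\<Sum>a\<in>points n. (\<sigma> \<circ> F) a * (\<Prod>i<n. a i)) \<noteq> 0"
    by (simp add: sum_points_weight[of \<sigma>])
  then show ?thesis
    using local_perm_comp[OF F(1) \<open>bij \<sigma>\<close>] depends_on_first_comp[OF F(2)] by blast
qed

theorem mainTheorem13:
  fixes p r n :: nat
  assumes "prime p" and "p \<ge> 3"
    and "CARD('a::{finite,field}) = p ^ r" and "CARD('a) > 3"
    and "n \<ge> 1"
  shows "\<exists>c :: (nat \<Rightarrow> nat) \<Rightarrow> 'a. reduced_poly n CARD('a) c \<and> is_lpp n c
           \<and> total_degree n c = n * (CARD('a) - 2)"
proof -
  have "odd p"
    using prime_odd_nat[OF assms(1)] assms(2) by simp
  then have two: "(2::'a) \<noteq> 0"
    using assms(3) two_neq_zero_if_odd_CARD[where 'a='a] by simp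
  obtain F :: "(nat \<Rightarrow> 'a) \<Rightarrow> 'a" where F: "local_perm n F" "depends_on_first n F"
    and top: "(\<Sum>a\<in>points n. F a * (\<Prod>i<n. a i)) \<noteq> 0"
    using exists_local_perm_top_sum_nonzero[OF assms(4) two] by blast
  have "mpeval n (interpolation_coeff n F) = F"
    using mpeval_interpolation_coeff[OF F(2)] by blast
  then have "is_lpp n (interpolation_coeff n F)"
    using F(1) by (simp add: is_lpp_iff_local_perm)
  then show ?thesis
    using reduced_poly_interpolation_coeff total_degree_interpolation_coeff[OF F(1) two assms(4) top]
    by blast
qed

end
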